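(* Let $H=(V,E)$ be a finite hypergraph whose edges are non-empty and pairwise disjoint and whose union is $V$ (so every vertex has degree exactly 1; edges of size 1 are allowed). If both $|V|$ and $|E|$ are even and $|V|\not\equiv |E|\pmod 4$, then $H$ is not $\mathbb{Z}_2\times\mathbb{Z}_2$-cordial.
   Context: Let $A=\mathbb{Z}_2\times\mathbb{Z}_2$. For a hypergraph $H=(V,E)$ and a labeling $c:V\to A$, write $v_c(a)=|c^{-1}(a)|$; $c$ is $A$-friendly if $|v_c(a)-v_c(b)|\le 1$ for all $a,b\in A$. It induces $c^*:E\to A$, $c^*(e)=\sum_{v\in e}c(v)$; write $e_{c^*}(a)=|(c^* )^{-1}(a)|$. $H$ is $A$-cordial if it admits an $A$-friendly labeling $c$ with $|e_{c^*}(a)-e_{c^*}(b)|\le 1$ for all $a,b\in A$. *)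

theory Defs
  imports Main "HOL-Library.Numeral_Type" "HOL-Library.Product_Plus"
begin

type_synonym klein = "2 \<times> 2"

definition vcount :: "'v set \<Rightarrow> ('v \<Rightarrow> klein) \<Rightarrow> klein \<Rightarrow> nat" where
  "vcount V c a = card {v \<in> V. c v = a}"

definition induced :: "('v \<Rightarrow> klein) \<Rightarrow> 'v set \<Rightarrow> klein" where
  "induced c e = (\<Sum>v\<in>e. c v)"

definition ecount :: "'v set set \<Rightarrow> ('v \<Rightarrow> klein) \<Rightarrow> klein \<Rightarrow> nat" where
  "ecount E c a = card {e \<in> E. induced c e = a}"

definition friendly :: "'v set \<Rightarrow> ('v \<Rightarrow> klein) \<Rightarrow> bool" where
  "friendly V c \<longleftrightarrow> (\<forall>a b. \<bar>int (vcount V c a) - int (vcount V c b)\<bar> \<le> 1)"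

definition klein_cordial :: "'v set \<Rightarrow> 'v set set \<Rightarrow> bool" where
  "klein_cordial V E \<longleftrightarrow> (\<exists>c. friendly V c \<and>
      (\<forall>a b. \<bar>int (ecount E c a) - int (ecount E c b)\<bar> \<le> 1))"

end

theory Submission
  imports Defs
begin

text \<open>Every element of the Klein four-group is its own inverse, so a label class of size \<open>n\<close>
  contributes its label to the total sum exactly when \<open>n\<close> is odd. If the four class sizes differ
  by at most one and add up to an even number, they are either all equal (and their odd classes,
  none or all four, sum to 0, the total being \<open>0 mod 4\<close>) or two of them exceed the other two by
  one (the odd classes are two distinct labels with nonzero sum, the total being \<open>2 mod 4\<close>).
  Hence for a friendly labelling of an even-sized set, the sum of all labels vanishes iff the size
  is divisible by 4. Since the edges partition \<open>V\<close>, the vertex labels and the induced edge labels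
  have the same sum; for a cordial labelling this forces \<open>4 dvd card V \<longleftrightarrow> 4 dvd card E\<close>, which
  for even sizes means \<open>card V \<equiv> card E (mod 4)\<close>.\<close>

lemma two_cases: "(x::2) = 0 \<or> x = 1"
proof (induct x)
  case (of_int z)
  then have "z = 0 \<or> z = 1" by fastforce
  then show ?case by auto
qed

lemma klein_add_self: "(a::klein) + a = 0"
proof -
  have "(x::2) + x = 0" for x
    using two_cases[of x] by auto
  then show ?thesis
    by (cases a) (simp add: zero_prod_def)
qed

lemma UNIV_klein: "(UNIV::klein set) = {(0,0), (0,1), (1,0), (1,1)}"
  using two_cases by (auto simp: prod_eq_iff)

lemma sum_klein_const:
  "finite A \<Longrightarrow> (\<Sum>x\<in>A. (a::klein)) = (if even (card A) then 0 else a)"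
  by (induction A rule: finite_induct) (auto simp: klein_add_self)

lemma sum_eq_sum_odd_vcount:
  assumes "finite S"
  shows "(\<Sum>x\<in>S. f x) = (\<Sum>a\<in>UNIV. if even (vcount S f a) then 0 else a)"
proof -
  have "(\<Sum>x\<in>{x\<in>S. f x = a}. f x) = (if even (vcount S f a) then 0 else a)" for a
    using assms by (simp add: sum_klein_const vcount_def)
  then show ?thesis
    using sum.group[OF assms, of UNIV f f] by simp
qed

lemma card_eq_sum_vcount:
  assumes "finite S"
  shows "card S = (\<Sum>a\<in>UNIV. vcount S f a)"
  using sum.group[OF assms, of UNIV f "\<lambda>_. 1::nat"] by (simp add: vcount_def)

lemma klein_parity_sum_eq_0_iff:
  fixes p q r t :: nat
  shows "(if even p then 0 else (0,0)) + (if even q then 0 else (0,1)) +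
         (if even r then 0 else (1,0)) + (if even t then 0 else (1,1)) = (0::klein)
     \<longleftrightarrow> (odd q \<longleftrightarrow> odd t) \<and> (odd r \<longleftrightarrow> odd t)"
  by (cases "even p"; cases "even q"; cases "even r"; cases "even t")
     (simp_all add: zero_prod_def klein_add_self[unfolded zero_prod_def, simplified])

lemma balanced_sum_mod_4_eq_0_iff:
  fixes p q r t :: nat
  assumes "\<And>x y. x \<in> {p, q, r, t} \<Longrightarrow> y \<in> {p, q, r, t} \<Longrightarrow> x \<le> y + 1"
    and "even (p + q + r + t)"
  shows "(p + q + r + t) mod 4 = 0 \<longleftrightarrow> (odd q \<longleftrightarrow> odd t) \<and> (odd r \<longleftrightarrow> odd t)"
proof -
  define m where "m = min p (min q (min r t))"
  have "m \<in> {p, q, r, t}"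
    unfolding m_def by (simp add: min_def)
  then have "p \<le> m + 1" "q \<le> m + 1" "r \<le> m + 1" "t \<le> m + 1"
    using assms(1) by simp_all
  moreover have "m \<le> p" "m \<le> q" "m \<le> r" "m \<le> t"
    unfolding m_def by simp_all
  ultimately have "p = m \<or> p = m + 1" "q = m \<or> q = m + 1" "r = m \<or> r = m + 1" "t = m \<or> t = m + 1"
    by linarith+
  then show ?thesis
    using assms(2) by (elim disjE) (simp_all, presburger+)
qed

lemma friendly_vcount_le:
  assumes "friendly V c"
  shows "vcount V c a \<le> vcount V c b + 1"
proof -
  have "\<bar>int (vcount V c a) - int (vcount V c b)\<bar> \<le> 1"
    using assms unfolding friendly_def by blast
  then show ?thesis by linarith
qed

lemma friendly_sum_eq_0_iff:
  assumes "finite S" and "even (card S)" and "friendly S f"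
  shows "(\<Sum>x\<in>S. f x) = 0 \<longleftrightarrow> 4 dvd card S"
proof -
  let ?n = "vcount S f"
  have card_S: "card S = ?n (0,0) + ?n (0,1) + ?n (1,0) + ?n (1,1)"
    using card_eq_sum_vcount[OF assms(1), of f] by (simp add: UNIV_klein add.assoc)
  have "(\<Sum>x\<in>S. f x) = (if even (?n (0,0)) then 0 else (0,0)) + (if even (?n (0,1)) then 0 else (0,1))
      + (if even (?n (1,0)) then 0 else (1,0)) + (if even (?n (1,1)) then 0 else (1,1))"
    using sum_eq_sum_odd_vcount[OF assms(1)] by (simp add: UNIV_klein add.assoc)
  then have "(\<Sum>x\<in>S. f x) = 0 \<longleftrightarrow>
      (odd (?n (0,1)) \<longleftrightarrow> odd (?n (1,1))) \<and> (odd (?n (1,0)) \<longleftrightarrow> odd (?n (1,1)))"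
    by (simp only: klein_parity_sum_eq_0_iff)
  also have "\<dots> \<longleftrightarrow> card S mod 4 = 0"
    unfolding card_S
  proof (rule balanced_sum_mod_4_eq_0_iff[symmetric])
    show "x \<le> y + 1" if "x \<in> {?n (0,0), ?n (0,1), ?n (1,0), ?n (1,1)}"
      "y \<in> {?n (0,0), ?n (0,1), ?n (1,0), ?n (1,1)}" for x y
      using that friendly_vcount_le[OF assms(3)] by blast
    show "even (?n (0,0) + ?n (0,1) + ?n (1,0) + ?n (1,1))"
      using assms(2) card_S by simp
  qed
  finally show ?thesis by presburger
qed

lemma sum_induced_partition:
  assumes "finite (\<Union>E)" and "\<forall>e1\<in>E. \<forall>e2\<in>E. e1 \<noteq> e2 \<longrightarrow> e1 \<inter> e2 = {}"
  shows "(\<Sum>e\<in>E. induced c e) = (\<Sum>v\<in>\<Union>E. c v)"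
  using sum.Union_disjoint[of E c] assms
  by (simp add: induced_def o_def Union_upper rev_finite_subset)

lemma klein_cordial_4_dvd_card_iff:
  assumes "finite V" and "\<forall>e1\<in>E. \<forall>e2\<in>E. e1 \<noteq> e2 \<longrightarrow> e1 \<inter> e2 = {}" and "\<Union>E = V"
    and "even (card V)" and "even (card E)" and "klein_cordial V E"
  shows "4 dvd card V \<longleftrightarrow> 4 dvd card E"
proof -
  obtain c where "friendly V c" and "friendly E (induced c)"
    using assms(6) by (auto simp: klein_cordial_def friendly_def vcount_def ecount_def)
  moreover have "finite E"
    using assms(1,3) finite_UnionD by blast
  ultimately show ?thesis
    using friendly_sum_eq_0_iff sum_induced_partition[of E c] assms by metis
qed

theorem proposition5:
  fixes V :: "'v set" and E :: "'v set set"
  assumes "finite V"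
    and "\<forall>e\<in>E. e \<noteq> {}"
    and "\<forall>e1\<in>E. \<forall>e2\<in>E. e1 \<noteq> e2 \<longrightarrow> e1 \<inter> e2 = {}"
    and "\<Union>E = V"
    and "even (card V)" and "even (card E)"
    and "card V mod 4 \<noteq> card E mod 4"
  shows "\<not> klein_cordial V E"
proof
  assume "klein_cordial V E"
  then have "4 dvd card V \<longleftrightarrow> 4 dvd card E"
    using klein_cordial_4_dvd_card_iff assms(1,3-6) by blast
  with assms(5-7) show False by presburger
qed

end
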